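(* Let $n\ge 2$ be an even integer and consider the configuration of $n$ lighthouses with center point light sources described in the context. Then the total dark area is infinite: $D(n)=\infty$. More precisely, for the target lighthouse $L_0$, no ray emitted by any other lighthouse passes through the region directly behind $L_0$ (on the side of $L_0$ away from the placement center $P$) in a way that bounds it, so the dark region behind $L_0$ is unbounded and of infinite area.
   Context: Setup ("lighthouse problem with center point light sources"): fix an integer $n\ge 1$ and a point $P$ (the placement center). There are $n$ lighthouses $L_0,L_1,\dots,L_{n-1}$, each an opaque closed disk of radius $1$; the center of $L_k$ is at distance $n$ from $P$, at polar angle $2\pi k/n$ around $P$ (so $L_0$'s center $C$ lies $n$ units to the right of $P$, and the lighthouses are numbered counter-clockwise). The illumination angle is $\alpha=2\pi/n$. Each lighthouse has a single point light source at its center, emitting light along straight rays within the angular sector of total angle $\alpha$ symmetric about the direction from its center toward $P$ (for $n=1$ this means all directions). Light is blocked by the lighthouse disks. A point outside all disks is dark if no such ray reaches it. By symmetry every lighthouse has a congruent dark region behind it (on the side away from $P$); $d(n)$ denotes the area of the dark region behind one lighthouse and $D(n)=n\cdot d(n)$ is the total dark area. *)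

theory Defs
  imports "HOL-Analysis.Analysis"
begin

text \<open>The plane is modelled as the complex numbers; the placement center P is 0.
  Lighthouse k (k < n) has center lh_center n k = n * cis (2 pi k / n) and is the
  closed disk of radius 1 around it.\<close>

definition lh_center :: "nat \<Rightarrow> nat \<Rightarrow> complex" where
  "lh_center n k = complex_of_real (real n) * cis (2 * pi * real k / real n)"

definition lh_disk :: "nat \<Rightarrow> nat \<Rightarrow> complex set" where
  "lh_disk n k = cball (lh_center n k) 1"

text \<open>Light emitted by the source at the center of lighthouse k travels along rays whose
  direction makes an angle of at most alpha/2 = pi/n with the direction towards P,
  i.e. direction - cis (2 pi k / n + theta) with |theta| <= pi/n. A point z is lit if
  it lies on such a ray and the segment from the source to z meets no other
  lighthouse disk (the ray leaves its own disk and, by convexity, never re-enters it).\<close>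

definition lit :: "nat \<Rightarrow> complex \<Rightarrow> bool" where
  "lit n z \<longleftrightarrow> (\<exists>k<n. \<exists>\<theta> t. \<bar>\<theta>\<bar> \<le> pi / real n \<and> t \<ge> 0 \<and>
      z = lh_center n k - complex_of_real t * cis (2 * pi * real k / real n + \<theta>) \<and>
      (\<forall>j<n. j \<noteq> k \<longrightarrow> closed_segment (lh_center n k) z \<inter> lh_disk n j = {}))"

definition dark :: "nat \<Rightarrow> complex \<Rightarrow> bool" where
  "dark n z \<longleftrightarrow> (\<forall>k<n. z \<notin> lh_disk n k) \<and> \<not> lit n z"

definition behind0 :: "nat \<Rightarrow> complex set" where
  "behind0 n = {z. Re z > real n}"

end

theory Submission
  imports Defs
begin

text \<open>The dark region behind L_0 contains a thin half-strip along the positive real axis beyond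
  L_0. Light from L_0 itself only moves leftwards, since its rays deviate by at most pi/n \<le> pi/2
  from the direction towards P. The opposite lighthouse L_{n/2}, which exists because n is even,
  aims at the strip, but its segments to the strip cross L_0. For any other L_k the angle pi k/n
  stays at least pi/n away from pi/2 (again by evenness), so its whole light cone lies on P's side
  of the line through the centers of L_0 and L_k, while the strip, when thin enough, lies strictly
  on the other side.\<close>

lemma closed_segment_meets_closed:
  fixes s :: "'a::euclidean_space"
  assumes "closed D"
  shows "closed {z. closed_segment s z \<inter> D \<noteq> {}}"
proof -
  define g where "g p = (1 - fst p) *\<^sub>R s + fst p *\<^sub>R snd p" for p :: "real \<times> 'a"
  have "closed (g -` D)"
    unfolding g_def by (intro closed_vimage assms continuous_intros)
  then have "closed {z. \<exists>u. u \<in> {0..1} \<and> (u, z) \<in> g -` D}"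
    by (intro closed_compact_projection) auto
  moreover have "{z. closed_segment s z \<inter> D \<noteq> {}} = {z. \<exists>u. u \<in> {0..1} \<and> (u, z) \<in> g -` D}"
    by (auto simp: closed_segment_def g_def)
  ultimately show ?thesis by simp
qed

lemma cos_mult_cos_add_nonneg:
  fixes a \<theta> :: real
  assumes "\<bar>\<theta>\<bar> \<le> a" "a \<le> pi - \<bar>\<theta>\<bar>" "\<bar>\<theta>\<bar> \<le> \<bar>a - pi / 2\<bar>"
  shows "0 \<le> cos a * cos (a + \<theta>)"
proof (cases "a \<le> pi / 2")
  case True
  then have "0 \<le> cos a" "0 \<le> cos (a + \<theta>)"
    using assms by (intro cos_ge_zero; linarith)+
  then show ?thesis by simp
next
  case False
  then have "0 \<le> cos (a - pi)" "0 \<le> cos (a + \<theta> - pi)"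
    using assms by (intro cos_ge_zero; linarith)+
  then have "cos a \<le> 0" "cos (a + \<theta>) \<le> 0" by simp_all
  then show ?thesis by (simp add: zero_le_mult_iff)
qed

text \<open>The left-hand side is the cross product of z - n with cis \<phi> - 1, so its sign tells on
  which side of the line through the lighthouse centers n and n cis \<phi> the point z lies.\<close>
lemma ray_side_identity:
  fixes n t \<phi> \<theta> :: real
  assumes "z = complex_of_real n * cis \<phi> - complex_of_real t * cis (\<phi> + \<theta>)"
  shows "Im z * (1 - cos \<phi>) + (Re z - n) * sin \<phi> = t * (sin \<theta> - sin (\<phi> + \<theta>))"
proof -
  have "Re z = n * cos \<phi> - t * cos (\<phi> + \<theta>)" "Im z = n * sin \<phi> - t * sin (\<phi> + \<theta>)"
    using assms by simp_all
  moreover have "sin \<theta> = sin (\<phi> + \<theta>) * cos \<phi> - cos (\<phi> + \<theta>) * sin \<phi>"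
    using sin_diff[of "\<phi> + \<theta>" \<phi>] by simp
  ultimately show ?thesis by algebra
qed

text \<open>Together with the identity above: every ray of a lighthouse other than L_0 and its opposite
  stays on P's side of the line joining its center to that of L_0. For odd n this fails when
  2k = n \<plusminus> 1, where the cone of L_k straddles that line.\<close>
lemma sin_mult_sin_diff_nonneg:
  fixes n k :: nat and \<theta> :: real
  assumes "even n" "0 < k" "k < n" "2 * k \<noteq> n" "\<bar>\<theta>\<bar> \<le> pi / n"
  defines "\<phi> \<equiv> 2 * pi * k / n"
  shows "0 \<le> sin \<phi> * (sin (\<phi> + \<theta>) - sin \<theta>)"
proof -
  define a where "a = pi * k / n"
  have n: "real n > 0" using assms by simp
  have "2 \<le> \<bar>2 * real k - real n\<bar>"
    using assms by (auto elim!: evenE)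
  then have "pi / (2 * n) * 2 \<le> pi / (2 * n) * \<bar>2 * real k - real n\<bar>"
    by (intro mult_left_mono) auto
  also have "\<dots> = \<bar>a - pi / 2\<bar>"
  proof -
    have "a - pi / 2 = pi / (2 * n) * (2 * real k - real n)"
      using n by (simp add: a_def field_simps)
    then show ?thesis by (simp add: abs_mult)
  qed
  finally have "\<bar>\<theta>\<bar> \<le> \<bar>a - pi / 2\<bar>"
    using assms(5) n by simp
  moreover have "pi / n \<le> a" "a + pi / n \<le> pi"
  proof -
    have "pi / n * 1 \<le> pi / n * k" "pi / n * (k + 1) \<le> pi / n * n"
      using assms by (intro mult_left_mono; simp)+
    then show "pi / n \<le> a" "a + pi / n \<le> pi"
      using n by (simp_all add: a_def distrib_left)
  qed
  then have "\<bar>\<theta>\<bar> \<le> a" "a \<le> pi - \<bar>\<theta>\<bar>"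
    using assms(5) by linarith+
  ultimately have "0 \<le> cos a * cos (a + \<theta>)" by (rule cos_mult_cos_add_nonneg[rotated 2])
  moreover have "sin \<phi> * (sin (\<phi> + \<theta>) - sin \<theta>) = 4 * (sin a)\<^sup>2 * (cos a * cos (a + \<theta>))"
  proof -
    have "\<phi> = 2 * a" by (simp add: \<phi>_def a_def)
    moreover have "sin (2 * a + \<theta>) - sin \<theta> = 2 * sin a * cos (a + \<theta>)"
      using sin_diff_sin[of "2 * a + \<theta>" \<theta>] by (simp add: add_divide_distrib add.commute)
    ultimately show ?thesis by (simp add: sin_double power2_eq_square)
  qed
  ultimately show ?thesis by simp
qed

lemma lh_center_0 [simp]: "lh_center n 0 = of_nat n"
  by (simp add: lh_center_def)

lemma lh_center_opposite:
  assumes "even n" "n > 0"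
  shows "lh_center n (n div 2) = - of_nat n"
proof -
  have "2 * pi * real (n div 2) / real n = pi"
    using assms by (auto elim!: evenE)
  then show ?thesis by (simp add: lh_center_def)
qed

lemma Re_le_of_mem_lh_disk:
  assumes "z \<in> lh_disk n k"
  shows "Re z \<le> real n + 1"
proof -
  have "Re (lh_center n k) \<le> real n"
    using mult_left_mono[OF cos_le_one, of "real n" "2 * pi * real k / real n"]
    by (simp add: lh_center_def)
  moreover have "Re z - Re (lh_center n k) \<le> dist (lh_center n k) z"
    using abs_Re_le_cmod[of "z - lh_center n k"] by (simp add: dist_norm norm_minus_commute)
  ultimately show ?thesis using assms by (simp add: lh_disk_def)
qed

lemma Re_le_of_ray_from_L0:
  assumes "n \<ge> 2" "\<bar>\<theta>\<bar> \<le> pi / n" "t \<ge> 0"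
  shows "Re (lh_center n 0 - of_real t * cis \<theta>) \<le> real n"
proof -
  have "pi / n \<le> pi / 2"
    using assms(1) by (intro divide_left_mono) auto
  then have "0 \<le> cos \<theta>"
    using assms(2) by (intro cos_ge_zero) linarith+
  then show ?thesis using assms(3) by simp
qed

lemma closed_segment_from_opposite_meets_disk0:
  assumes "real n < Re z" "\<bar>Im z\<bar> \<le> 1"
  shows "closed_segment (- of_nat n) z \<inter> lh_disk n 0 \<noteq> {}"
proof -
  define \<mu> where "\<mu> = 2 * real n / (Re z + real n)"
  define p where "p = (1 - \<mu>) *\<^sub>R (- of_nat n) + \<mu> *\<^sub>R z"
  have \<mu>: "0 \<le> \<mu>" "\<mu> \<le> 1" "\<mu> * (Re z + real n) = 2 * real n"
    using assms(1) by (auto simp: \<mu>_def field_simps)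
  then have "p \<in> closed_segment (- of_nat n) z"
    unfolding p_def closed_segment_def by blast
  moreover have "Re p = real n" "Im p = \<mu> * Im z"
    using \<mu>(3) by (simp_all add: p_def algebra_simps)
  then have "dist (lh_center n 0) p \<le> 1"
    using \<mu> assms(2) by (simp add: dist_norm cmod_def abs_mult mult_le_one)
  ultimately show ?thesis by (auto simp: lh_disk_def)
qed

lemma not_lit_in_half_strip:
  assumes n: "n \<ge> 2" "even n" and z: "real n + 1 < Re z" "\<bar>Im z\<bar> < \<epsilon>" and "\<epsilon> \<le> 1 / 2"
    and sin_ge: "\<And>k::nat. 0 < k \<Longrightarrow> k < n \<Longrightarrow> 2 * k \<noteq> n \<Longrightarrow> 2 * \<epsilon> \<le> \<bar>sin (2 * pi * k / n)\<bar>"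
  shows "\<not> lit n z"
proof
  assume "lit n z"
  then obtain k \<theta> t where k: "k < n" and \<theta>: "\<bar>\<theta>\<bar> \<le> pi / n" and t: "t \<ge> 0"
    and ray: "z = lh_center n k - of_real t * cis (2 * pi * k / n + \<theta>)"
    and unblocked: "\<forall>j<n. j \<noteq> k \<longrightarrow> closed_segment (lh_center n k) z \<inter> lh_disk n j = {}"
    unfolding lit_def by blast
  consider "k = 0" | "2 * k = n" | "0 < k" "2 * k \<noteq> n" by linarith
  then show False
  proof cases
    case 1
    then show False using Re_le_of_ray_from_L0[OF n(1) \<theta> t] ray z(1) by simp
  next
    case 2
    then have "closed_segment (lh_center n k) z \<inter> lh_disk n 0 \<noteq> {}"
      using closed_segment_from_opposite_meets_disk0[of n z] lh_center_opposite[of n] n z \<open>\<epsilon> \<le> 1 / 2\<close>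
      by auto
    then show False using unblocked 2 n(1) by auto
  next
    case 3
    define \<phi> where "\<phi> = 2 * pi * k / n"
    have side: "Im z * (1 - cos \<phi>) + (Re z - n) * sin \<phi> = t * (sin \<theta> - sin (\<phi> + \<theta>))"
      by (rule ray_side_identity) (simp add: ray \<phi>_def lh_center_def)
    have "sin \<phi> * (Im z * (1 - cos \<phi>) + (Re z - n) * sin \<phi>)
        = - t * (sin \<phi> * (sin (\<phi> + \<theta>) - sin \<theta>))"
      unfolding side by (simp add: algebra_simps)
    also have "\<dots> \<le> 0"
      unfolding \<phi>_def using sin_mult_sin_diff_nonneg 3 n(2) k \<theta> t by simp
    finally have "(Re z - n) * (sin \<phi>)\<^sup>2 \<le> - (sin \<phi> * (Im z * (1 - cos \<phi>)))"
      by (simp add: power2_eq_square algebra_simps)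
    moreover have "\<bar>Im z * (1 - cos \<phi>)\<bar> < \<bar>sin \<phi>\<bar>"
    proof -
      have "\<bar>1 - cos \<phi>\<bar> \<le> 2" using cos_ge_minus_one[of \<phi>] cos_le_one[of \<phi>] by auto
      then have "\<bar>Im z * (1 - cos \<phi>)\<bar> \<le> \<bar>Im z\<bar> * 2" by (simp add: abs_mult mult_left_mono)
      then show ?thesis using z(2) sin_ge[OF 3(1) k 3(2)] by (simp add: \<phi>_def)
    qed
    then have "\<bar>sin \<phi>\<bar> * \<bar>Im z * (1 - cos \<phi>)\<bar> < \<bar>sin \<phi>\<bar> * \<bar>sin \<phi>\<bar>"
      by (intro mult_strict_left_mono) auto
    then have "\<bar>sin \<phi> * (Im z * (1 - cos \<phi>))\<bar> < (sin \<phi>)\<^sup>2"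
      by (simp add: abs_mult power2_eq_square)
    moreover have "(sin \<phi>)\<^sup>2 \<le> (Re z - n) * (sin \<phi>)\<^sup>2"
      using mult_right_mono[of 1 "Re z - n" "(sin \<phi>)\<^sup>2"] z(1) by simp
    ultimately show False by linarith
  qed
qed

lemma lit_in_sets_lborel: "{z. lit n z} \<in> sets lborel"
proof -
  define ray where "ray k p = lh_center n k - of_real (snd p) * cis (2 * pi * k / n + fst p)"
    for k and p :: "real \<times> real"
  define unblocked where "unblocked k = (\<Inter>j\<in>{j. j < n \<and> j \<noteq> k}.
      - {z. closed_segment (lh_center n k) z \<inter> lh_disk n j \<noteq> {}})" for k
  have "{z. lit n z} = (\<Union>k<n. \<Union>m::nat. ray k ` ({-(pi / n)..pi / n} \<times> {0..real m}) \<inter> unblocked k)"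
  proof (intro equalityI subsetI)
    fix z assume "z \<in> {z. lit n z}"
    then obtain k \<theta> t where "k < n" "\<bar>\<theta>\<bar> \<le> pi / n" "t \<ge> 0" "z = ray k (\<theta>, t)" "z \<in> unblocked k"
      unfolding lit_def ray_def unblocked_def by auto
    moreover obtain m :: nat where "t \<le> real m" using real_arch_simple by blast
    ultimately show "z \<in> (\<Union>k<n. \<Union>m::nat. ray k ` ({-(pi / n)..pi / n} \<times> {0..real m}) \<inter> unblocked k)"
      by force
  qed (fastforce simp: lit_def ray_def unblocked_def abs_le_iff)
  moreover have "ray k ` ({-(pi / n)..pi / n} \<times> {0..real m}) \<in> sets lborel" for k m
    unfolding sets_lborel
    by (intro borel_closed compact_imp_closed compact_continuous_image compact_Times compact_Icc)
       (auto simp: ray_def intro!: continuous_intros)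
  moreover have "unblocked k \<in> sets lborel" for k
    unfolding unblocked_def sets_lborel
    by (intro borel_open open_INT) (auto simp: lh_disk_def intro!: closed_segment_meets_closed)
  ultimately show ?thesis by auto
qed

lemma dark_in_sets_lborel: "{z. dark n z} \<in> sets lborel"
proof -
  have "{z. dark n z} = (\<Inter>k<n. - lh_disk n k) \<inter> - {z. lit n z}"
    by (auto simp: dark_def)
  moreover have "open (\<Inter>k<n. - lh_disk n k)"
    by (intro open_INT) (auto simp: lh_disk_def)
  ultimately show ?thesis
    using lit_in_sets_lborel by (auto simp: borel_open)
qed

lemma emeasure_half_strip:
  assumes "\<epsilon> > 0"
  shows "emeasure lborel {z. a < Re z \<and> \<bar>Im z\<bar> < \<epsilon>} = \<infinity>"
proof -
  have "of_nat m \<le> emeasure lborel {z. a < Re z \<and> \<bar>Im z\<bar> < \<epsilon>}" for m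
  proof -
    define l where "l = Complex a (- \<epsilon>)"
    define u where "u = Complex (a + m / (2 * \<epsilon>)) \<epsilon>"
    have "emeasure lborel (box l u) = ennreal (m / (2 * \<epsilon>) * (2 * \<epsilon>))"
      using assms by (subst emeasure_lborel_box) (auto simp: Basis_complex_def l_def u_def)
    then have "of_nat m = emeasure lborel (box l u)"
      using assms by (simp add: ennreal_of_nat_eq_real_of_nat)
    also have "\<dots> \<le> emeasure lborel {z. a < Re z \<and> \<bar>Im z\<bar> < \<epsilon>}"
      by (intro emeasure_mono)
         (auto simp: box_def Basis_complex_def l_def u_def borel_open open_halfspace_Re_gt)
    finally show ?thesis .
  qed
  then have "(SUP m. of_nat m :: ennreal) \<le> emeasure lborel {z. a < Re z \<and> \<bar>Im z\<bar> < \<epsilon>}"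
    by (intro SUP_least)
  then show ?thesis by (simp add: ennreal_SUP_of_nat_eq_top top_unique)
qed

lemma half_strip_unbounded:
  assumes "\<epsilon> > 0"
  shows "\<not> bounded {z. a < Re z \<and> \<bar>Im z\<bar> < \<epsilon>}"
proof
  assume "bounded {z. a < Re z \<and> \<bar>Im z\<bar> < \<epsilon>}"
  then obtain B where B: "\<And>z. a < Re z \<Longrightarrow> \<bar>Im z\<bar> < \<epsilon> \<Longrightarrow> norm z \<le> B"
    unfolding bounded_iff by blast
  have "norm (of_real (\<bar>a\<bar> + \<bar>B\<bar> + 1) :: complex) \<le> B"
    using assms by (intro B) auto
  then show False by (simp only: norm_of_real)
qed

lemma sin_two_pi_div_nonzero:
  fixes n k :: nat
  assumes "0 < k" "k < n" "2 * k \<noteq> n"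
  shows "sin (2 * pi * k / n) \<noteq> 0"
proof (cases "2 * k < n")
  case True
  then have "0 < sin (2 * pi * k / n)"
    using assms by (intro sin_gt_zero) (auto simp: field_simps)
  then show ?thesis by simp
next
  case False
  then have "sin (2 * pi * k / n) < 0"
    using assms by (intro sin_lt_zero) (auto simp: field_simps)
  then show ?thesis by simp
qed

lemma half_strip_width_exists:
  fixes n :: nat
  shows "\<exists>\<epsilon>>0. \<epsilon> \<le> 1 / 2 \<and> (\<forall>k. 0 < k \<longrightarrow> k < n \<longrightarrow> 2 * k \<noteq> n \<longrightarrow> 2 * \<epsilon> \<le> \<bar>sin (2 * pi * k / n)\<bar>)"
proof -
  define K where "K = {k. 0 < k \<and> k < n \<and> 2 * k \<noteq> n}"
  define \<epsilon> where "\<epsilon> = Min (insert (1 / 2) ((\<lambda>k. \<bar>sin (2 * pi * k / n)\<bar> / 2) ` K))"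
  have "finite K" by (simp add: K_def)
  then have "\<epsilon> > 0"
    using sin_two_pi_div_nonzero by (auto simp: \<epsilon>_def K_def)
  moreover have "\<epsilon> \<le> 1 / 2"
    unfolding \<epsilon>_def using \<open>finite K\<close> by (intro Min_le) auto
  moreover have "\<epsilon> \<le> \<bar>sin (2 * pi * k / n)\<bar> / 2" if "k \<in> K" for k
    unfolding \<epsilon>_def using \<open>finite K\<close> that by (intro Min_le) auto
  ultimately show ?thesis by (auto simp: K_def mult.commute)
qed

lemma half_strip_subset_dark_behind0:
  assumes "n \<ge> 2" "even n" "\<epsilon> \<le> 1 / 2"
    and "\<And>k::nat. 0 < k \<Longrightarrow> k < n \<Longrightarrow> 2 * k \<noteq> n \<Longrightarrow> 2 * \<epsilon> \<le> \<bar>sin (2 * pi * k / n)\<bar>"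
  shows "{z. real n + 1 < Re z \<and> \<bar>Im z\<bar> < \<epsilon>} \<subseteq> {z. dark n z} \<inter> behind0 n"
proof
  fix z assume z: "z \<in> {z. real n + 1 < Re z \<and> \<bar>Im z\<bar> < \<epsilon>}"
  then have "\<not> lit n z"
    using not_lit_in_half_strip[OF assms(1,2) _ _ assms(3,4)] by blast
  moreover have "z \<notin> lh_disk n k" for k
    using Re_le_of_mem_lh_disk z by fastforce
  ultimately show "z \<in> {z. dark n z} \<inter> behind0 n"
    using z by (simp add: dark_def behind0_def)
qed

theorem mainTheorem1:
  fixes n :: nat
  assumes "n \<ge> 2" and "even n"
  shows "emeasure lborel {z. dark n z} = \<infinity>
       \<and> emeasure lborel ({z. dark n z} \<inter> behind0 n) = \<infinity>
       \<and> \<not> bounded ({z. dark n z} \<inter> behind0 n)"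
proof -
  obtain \<epsilon> where "\<epsilon> > 0" "\<epsilon> \<le> 1 / 2"
    and "\<forall>k. 0 < k \<longrightarrow> k < n \<longrightarrow> 2 * k \<noteq> n \<longrightarrow> 2 * \<epsilon> \<le> \<bar>sin (2 * pi * k / n)\<bar>"
    using half_strip_width_exists by blast
  then have strip: "{z. real n + 1 < Re z \<and> \<bar>Im z\<bar> < \<epsilon>} \<subseteq> {z. dark n z} \<inter> behind0 n"
    by (intro half_strip_subset_dark_behind0[OF assms]) auto
  have measurable: "{z. dark n z} \<inter> behind0 n \<in> sets lborel"
    using dark_in_sets_lborel by (auto simp: behind0_def borel_open open_halfspace_Re_gt)
  have behind: "emeasure lborel ({z. dark n z} \<inter> behind0 n) = \<infinity>"
    using emeasure_mono[OF strip measurable] emeasure_half_strip[OF \<open>\<epsilon> > 0\<close>]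
    by (simp add: top_unique)
  moreover have "emeasure lborel {z. dark n z} = \<infinity>"
    using emeasure_mono[of "{z. dark n z} \<inter> behind0 n" "{z. dark n z}" lborel]
      dark_in_sets_lborel behind by (simp add: top_unique)
  moreover have "\<not> bounded ({z. dark n z} \<inter> behind0 n)"
    using bounded_subset[OF _ strip] half_strip_unbounded[OF \<open>\<epsilon> > 0\<close>] by blast
  ultimately show ?thesis by blast
qed

end
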